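(* Let $n\ge2$. For any $A,B\in\mathbb{R}^{n\times n}$ there exists a nonzero polynomial $P\in\mathbb{Z}\langle X,Y\rangle$ in two non-commuting variables with $P(A,B)=\mathbf{0}$; i.e. no two real $n\times n$ matrices are algebraically independent over $\mathbb{Z}$.
   Context: $\mathbb{Z}\langle X,Y\rangle$ denotes the ring of polynomials in non-commuting variables $X,Y$ with integer coefficients (finite $\mathbb{Z}$-linear combinations of words in $X,Y$); nonzero means nonzero as a formal polynomial. $P(A,B)$ denotes evaluation by substituting matrices (constant term times $I_n$). $A,B$ are algebraically dependent if some nonzero such $P$ has $P(A,B)=\mathbf{0}$, and algebraically independent otherwise. *)

theory Defs
  imports "HOL-Analysis.Analysis"
begin

text \<open>Noncommutative polynomials in Z<X,Y>: words over the alphabet {X,Y} are lists of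
letters; a polynomial is a coefficient function from words to int with finite support.\<close>

datatype letter = LX | LY

type_synonym ncpoly = "letter list \<Rightarrow> int"

definition ncpoly_valid :: "ncpoly \<Rightarrow> bool" where
  "ncpoly_valid P \<longleftrightarrow> finite {w. P w \<noteq> 0}"

definition ncpoly_nonzero :: "ncpoly \<Rightarrow> bool" where
  "ncpoly_nonzero P \<longleftrightarrow> (\<exists>w. P w \<noteq> 0)"

fun word_eval :: "letter list \<Rightarrow> real^'n^'n \<Rightarrow> real^'n^'n \<Rightarrow> real^'n^'n" where
  "word_eval [] A B = mat 1"
| "word_eval (LX # w) A B = A ** word_eval w A B"
| "word_eval (LY # w) A B = B ** word_eval w A B"

definition ncpoly_eval :: "ncpoly \<Rightarrow> real^'n^'n \<Rightarrow> real^'n^'n \<Rightarrow> real^'n^'n" where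
  "ncpoly_eval P A B = (\<Sum>w\<in>{w. P w \<noteq> 0}. real_of_int (P w) *\<^sub>R word_eval w A B)"

definition alg_dependent :: "real^'n^'n \<Rightarrow> real^'n^'n \<Rightarrow> bool" where
  "alg_dependent A B \<longleftrightarrow>
     (\<exists>P. ncpoly_valid P \<and> ncpoly_nonzero P \<and> ncpoly_eval P A B = 0)"

end

theory Submission
  imports Defs "HOL-Combinatorics.Permutations"
begin

(* The standard polynomial S_m(X_0, ..., X_{m-1}) = \<Sum>\<sigma> sgn \<sigma> X_\<sigma>(0) \<cdots> X_\<sigma>(m-1) is
   multilinear and alternating, so it vanishes on the n^2-dimensional space of real n \<times> n
   matrices as soon as m > n^2. Substituting X_j := X Y^j turns it into a polynomial in X and Y
   with integer coefficients, which is nonzero because the words X Y^\<sigma>(0) \<cdots> X Y^\<sigma>(m-1)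
   determine \<sigma>: the blocks X Y^j form a prefix code. *)

lemma matrix_add_rdistrib: "((A::'a::semiring_1^'n^'m) + B) ** C = A ** C + B ** C"
  by (vector matrix_matrix_mult_def sum.distrib[symmetric] field_simps)

lemma linear_matrix_mult_left: "linear (\<lambda>X::real^'n^'m. (C::real^'m^'p) ** X)"
  by (rule linearI) (simp_all add: matrix_add_ldistrib matrix_scalar_ac scalar_matrix_assoc)

lemma linear_matrix_mult_right: "linear (\<lambda>X::real^'n^'m. X ** (C::real^'p^'n))"
  by (rule linearI) (simp_all add: matrix_add_rdistrib scalar_matrix_assoc)

fun matrix_prod_upto :: "(nat \<Rightarrow> real^'n^'n) \<Rightarrow> nat \<Rightarrow> real^'n^'n" where
  "matrix_prod_upto g 0 = mat 1"
| "matrix_prod_upto g (Suc k) = matrix_prod_upto g k ** g k"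

lemma matrix_prod_upto_cong:
  "(\<And>j. j < m \<Longrightarrow> g j = h j) \<Longrightarrow> matrix_prod_upto g m = matrix_prod_upto h m"
  by (induction m) auto

lemma linear_matrix_prod_upto_update:
  assumes "q < m"
  shows "linear (\<lambda>x. matrix_prod_upto (g(q := x)) m)"
  using assms
proof (induction m)
  case 0
  then show ?case by simp
next
  case (Suc m)
  show ?case
  proof (cases "q = m")
    case True
    have "matrix_prod_upto (g(q := x)) m = matrix_prod_upto g m" for x
      by (rule matrix_prod_upto_cong) (simp add: True)
    then have "(\<lambda>x. matrix_prod_upto (g(q := x)) (Suc m)) = (\<lambda>x. matrix_prod_upto g m ** x)"
      using True by simp
    then show ?thesis
      by (simp only: linear_matrix_mult_left)
  next
    case False
    with Suc.prems have "q < m" by simp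
    then have "linear (\<lambda>x. matrix_prod_upto (g(q := x)) m)" by (rule Suc.IH)
    then have "linear ((\<lambda>X. X ** g m) \<circ> (\<lambda>x. matrix_prod_upto (g(q := x)) m))"
      by (intro linear_compose linear_matrix_mult_right)
    moreover have "(\<lambda>X. X ** g m) \<circ> (\<lambda>x. matrix_prod_upto (g(q := x)) m)
                   = (\<lambda>x. matrix_prod_upto (g(q := x)) (Suc m))"
      using False by (simp add: fun_eq_iff)
    ultimately show ?thesis by (simp only:)
  qed
qed

definition standard_poly :: "nat \<Rightarrow> (nat \<Rightarrow> real^'n^'n) \<Rightarrow> real^'n^'n" where
  "standard_poly m f =
     (\<Sum>p \<in> {p. p permutes {..<m}}. of_int (sign p) *\<^sub>R matrix_prod_upto (f \<circ> p) m)"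

lemma linear_standard_poly_update:
  assumes "k < m"
  shows "linear (\<lambda>x. standard_poly m (f(k := x)))"
  unfolding standard_poly_def
proof (intro linear_compose_sum ballI linear_compose_scale_right)
  fix p
  assume "p \<in> {p. p permutes {..<m}}"
  then have p: "p permutes {..<m}" by simp
  have "(f(k := x)) \<circ> p = (f \<circ> p)(inv p k := x)" for x
    by (auto simp: fun_eq_iff permutes_inverses[OF p])
  moreover have "inv p k < m"
    using p assms by (metis lessThan_iff permutes_inv permutes_in_image)
  ultimately show "linear (\<lambda>x. matrix_prod_upto (f(k := x) \<circ> p) m)"
    by (simp add: linear_matrix_prod_upto_update)
qed

lemma standard_poly_eq_0_if_repeated:
  assumes "i < m" "j < m" "i \<noteq> j" "f i = f j"
  shows "standard_poly m f = 0"
proof -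
  define t where "t = Transposition.transpose i j"
  define Perms where "Perms = {p. p permutes {..<m}}"
  define summand where "summand p = of_int (sign p) *\<^sub>R matrix_prod_upto (f \<circ> p) m" for p
  have t: "t permutes {..<m}"
    unfolding t_def using assms by (simp add: permutes_swap_id)
  have "sum summand Perms = sum (\<lambda>p. summand (t \<circ> p)) Perms"
    by (rule sum.reindex_bij_witness[of _ "\<lambda>p. t \<circ> p" "\<lambda>p. t \<circ> p"])
      (use t in \<open>auto simp: Perms_def t_def comp_assoc[symmetric] intro: permutes_compose\<close>)
  also have "\<dots> = sum (\<lambda>p. - summand p) Perms"
  proof (rule sum.cong[OF refl])
    fix p
    assume "p \<in> Perms"
    then have "permutation p"
      unfolding Perms_def using permutation_permutes by blast
    moreover have "permutation t"
      using t permutation_permutes by blast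
    ultimately have "sign (t \<circ> p) = - sign p"
      using assms by (simp add: sign_compose t_def sign_swap_id)
    moreover have "f \<circ> (t \<circ> p) = f \<circ> p"
      using assms by (auto simp: fun_eq_iff t_def Transposition.transpose_def)
    ultimately show "summand (t \<circ> p) = - summand p"
      unfolding summand_def by simp
  qed
  finally have "sum summand Perms = 0"
    by (simp add: sum_negf eq_neg_iff_add_eq_0 flip: scaleR_2)
  then show ?thesis
    unfolding standard_poly_def Perms_def summand_def .
qed

lemma alternating_multilinear_eq_0:
  fixes F :: "(nat \<Rightarrow> 'a::euclidean_space) \<Rightarrow> 'b::real_vector"
  assumes linear: "\<And>f k. k < m \<Longrightarrow> linear (\<lambda>x. F (f(k := x)))"
    and alternating: "\<And>f i j. i < m \<Longrightarrow> j < m \<Longrightarrow> i \<noteq> j \<Longrightarrow> f i = f j \<Longrightarrow> F f = 0"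
    and dim: "DIM('a) < m"
  shows "F f = 0"
proof (cases "inj_on f {..<m}")
  case False
  then show ?thesis
    unfolding inj_on_def using alternating by auto
next
  case True
  define V where "V = f ` {..<m}"
  have "finite V" "card V = m"
    unfolding V_def using True by (simp_all add: card_image)
  then have "dependent V"
    using dim dependent_biggerset by auto
  then obtain k where k: "k < m" and "f k \<in> span (V - {f k})"
    unfolding dependent_def V_def by auto
  then obtain u where u: "f k = (\<Sum>v \<in> V - {f k}. u v *\<^sub>R v)"
    using \<open>finite V\<close> real_vector.span_finite[of "V - {f k}"] by auto
  have "F f = F (f(k := \<Sum>v \<in> V - {f k}. u v *\<^sub>R v))"
    by (simp flip: u)
  also have "\<dots> = (\<Sum>v \<in> V - {f k}. F (f(k := u v *\<^sub>R v)))"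
    by (rule linear_sum[OF linear[OF k]])
  also have "\<dots> = (\<Sum>v \<in> V - {f k}. u v *\<^sub>R F (f(k := v)))"
    by (simp only: linear_scale[OF linear[OF k]])
  also have "\<dots> = 0"
  proof (intro sum.neutral ballI)
    fix v
    assume "v \<in> V - {f k}"
    then obtain j where "j < m" "j \<noteq> k" "v = f j"
      unfolding V_def by auto
    then have "F (f(k := v)) = 0"
      using alternating[of k j "f(k := v)"] k by auto
    then show "u v *\<^sub>R F (f(k := v)) = 0" by simp
  qed
  finally show ?thesis .
qed

lemma standard_poly_eq_0:
  fixes f :: "nat \<Rightarrow> real^'n^'n"
  assumes "CARD('n)^2 < m"
  shows "standard_poly m f = 0"
  by (rule alternating_multilinear_eq_0[where F = "standard_poly m"])
    (use assms in \<open>auto simp: linear_standard_poly_update standard_poly_eq_0_if_repeated power2_eq_square\<close>)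

definition ncpoly_sum :: "('i \<Rightarrow> int) \<Rightarrow> ('i \<Rightarrow> letter list) \<Rightarrow> 'i set \<Rightarrow> ncpoly" where
  "ncpoly_sum c W I = (\<lambda>w. \<Sum>i\<in>I. if W i = w then c i else 0)"

lemma ncpoly_sum_support: "{w. ncpoly_sum c W I w \<noteq> 0} \<subseteq> W ` I"
proof
  fix w
  assume "w \<in> {w. ncpoly_sum c W I w \<noteq> 0}"
  then obtain i where "i \<in> I" "(if W i = w then c i else 0) \<noteq> 0"
    unfolding ncpoly_sum_def by (blast elim: sum.not_neutral_contains_not_neutral)
  then show "w \<in> W ` I"
    by (auto split: if_splits)
qed

lemma ncpoly_valid_sum: "finite I \<Longrightarrow> ncpoly_valid (ncpoly_sum c W I)"
  unfolding ncpoly_valid_def by (rule finite_subset[OF ncpoly_sum_support]) simp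

lemma ncpoly_sum_coeff:
  assumes "finite I" "inj_on W I" "i \<in> I"
  shows "ncpoly_sum c W I (W i) = c i"
proof -
  have "ncpoly_sum c W I (W i) = (\<Sum>j\<in>I. if j = i then c j else 0)"
    unfolding ncpoly_sum_def
    by (rule sum.cong[OF refl]) (use assms in \<open>auto dest: inj_onD\<close>)
  then show ?thesis
    using assms by simp
qed

lemma ncpoly_eval_sum:
  assumes "finite I"
  shows "ncpoly_eval (ncpoly_sum c W I) A B = (\<Sum>i\<in>I. of_int (c i) *\<^sub>R word_eval (W i) A B)"
proof -
  have "ncpoly_eval (ncpoly_sum c W I) A B
        = (\<Sum>w \<in> W ` I. of_int (ncpoly_sum c W I w) *\<^sub>R word_eval w A B)"
    unfolding ncpoly_eval_def using assms ncpoly_sum_support[of c W I]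
    by (intro sum.mono_neutral_left) auto
  also have "\<dots> = (\<Sum>w \<in> W ` I. \<Sum>i\<in>I. if W i = w then of_int (c i) *\<^sub>R word_eval w A B else 0)"
    unfolding ncpoly_sum_def of_int_sum scaleR_sum_left by (intro sum.cong refl) simp
  also have "\<dots> = (\<Sum>i\<in>I. \<Sum>w \<in> W ` I. if W i = w then of_int (c i) *\<^sub>R word_eval w A B else 0)"
    by (rule sum.swap)
  also have "\<dots> = (\<Sum>i\<in>I. of_int (c i) *\<^sub>R word_eval (W i) A B)"
    using assms by simp
  finally show ?thesis .
qed

lemma word_eval_append: "word_eval (u @ v) A B = word_eval u A B ** word_eval v A B"
proof (induction u)
  case Nil
  then show ?case by simp
next
  case (Cons l u)
  then show ?case by (cases l) (simp_all add: matrix_mul_assoc)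
qed

lemma word_eval_concat_upt:
  "word_eval (concat (map u [0..<m])) A B = matrix_prod_upto (\<lambda>j. word_eval (u j) A B) m"
  by (induction m) (simp_all add: word_eval_append)

definition xy_word :: "nat \<Rightarrow> letter list" where
  "xy_word j = LX # replicate j LY"

lemma replicate_LY_append_eq:
  assumes "replicate a LY @ u = replicate b LY @ v"
    and "u = [] \<or> hd u = LX" "v = [] \<or> hd v = LX"
  shows "a = b \<and> u = v"
  using assms
proof (induction a arbitrary: b)
  case 0
  then show ?case by (cases b) auto
next
  case (Suc a)
  then show ?case by (cases b) auto
qed

lemma concat_map_xy_word_inject:
  "concat (map xy_word xs) = concat (map xy_word ys) \<Longrightarrow> xs = ys"
proof (induction xs arbitrary: ys)
  case Nil
  then show ?case by (cases ys) (auto simp: xy_word_def)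
next
  case (Cons x xs)
  then obtain y ys' where ys: "ys = y # ys'"
    by (cases ys) (auto simp: xy_word_def)
  have hd_LX: "concat (map xy_word zs) = [] \<or> hd (concat (map xy_word zs)) = LX" for zs
    by (cases zs) (auto simp: xy_word_def)
  have "replicate x LY @ concat (map xy_word xs) = replicate y LY @ concat (map xy_word ys')"
    using Cons.prems ys by (simp add: xy_word_def[of x] xy_word_def[of y])
  then have "x = y \<and> concat (map xy_word xs) = concat (map xy_word ys')"
    by (rule replicate_LY_append_eq[OF _ hd_LX hd_LX])
  then show ?case
    using Cons.IH ys by auto
qed

lemma inj_on_xy_word_permutes:
  "inj_on (\<lambda>p. concat (map (xy_word \<circ> p) [0..<m])) {p. p permutes {..<m}}"
proof (rule inj_onI)
  fix p q
  assume p: "p \<in> {p. p permutes {..<m}}" and q: "q \<in> {p. p permutes {..<m}}"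
    and "concat (map (xy_word \<circ> p) [0..<m]) = concat (map (xy_word \<circ> q) [0..<m])"
  then have map_eq: "map p [0..<m] = map q [0..<m]"
    by (intro concat_map_xy_word_inject) simp
  show "p = q"
  proof
    fix j
    show "p j = q j"
    proof (cases "j < m")
      case True
      then show ?thesis
        using map_eq by simp
    next
      case False
      then show ?thesis
        using p q by (simp add: permutes_not_in)
    qed
  qed
qed

definition standard_xy_ncpoly :: "nat \<Rightarrow> ncpoly" where
  "standard_xy_ncpoly m =
     ncpoly_sum sign (\<lambda>p. concat (map (xy_word \<circ> p) [0..<m])) {p. p permutes {..<m}}"

lemma ncpoly_valid_standard_xy: "ncpoly_valid (standard_xy_ncpoly m)"
  unfolding standard_xy_ncpoly_def
  by (rule ncpoly_valid_sum) (simp add: finite_permutations)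

lemma ncpoly_nonzero_standard_xy: "ncpoly_nonzero (standard_xy_ncpoly m)"
proof -
  have "standard_xy_ncpoly m (concat (map (xy_word \<circ> id) [0..<m])) = sign id"
    using ncpoly_sum_coeff[OF finite_permutations[OF finite_lessThan] inj_on_xy_word_permutes,
        where i = id and c = sign]
    by (simp add: standard_xy_ncpoly_def)
  then show ?thesis
    unfolding ncpoly_nonzero_def by (metis sign_id one_neq_zero)
qed

lemma ncpoly_eval_standard_xy:
  "ncpoly_eval (standard_xy_ncpoly m) A B = standard_poly m (\<lambda>j. word_eval (xy_word j) A B)"
  unfolding standard_xy_ncpoly_def standard_poly_def
  by (simp add: ncpoly_eval_sum finite_permutations word_eval_concat_upt o_def)

theorem mainTheorem13:
  fixes A B :: "real^'n^'n"
  assumes "CARD('n) \<ge> 2"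
  shows "\<exists>P. ncpoly_valid P \<and> ncpoly_nonzero P \<and> ncpoly_eval P A B = 0"
proof -
  let ?P = "standard_xy_ncpoly (CARD('n)^2 + 1)"
  have "ncpoly_eval ?P A B = 0"
    by (simp add: ncpoly_eval_standard_xy standard_poly_eq_0)
  then show ?thesis
    using ncpoly_valid_standard_xy ncpoly_nonzero_standard_xy by blast
qed

end
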